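(* Let $R$ be a finite principal left ideal ring, $<$ a respectful order on $R$, $B$ an ordered basis of $R^n$, and $P$ a left multiplicative property on $R^n$ with $P[0]$ true. Then the lexicode $C(<,B,P)$ is maximal with respect to inclusion among all left submodules $C\subseteq R^n$ such that $P[x]$ holds for all $x\in C$; i.e., there is no left submodule $C$ with $C(<,B,P)\subsetneq C\subseteq R^n$ all of whose elements satisfy $P$.
   Context: $R^\ast$ is the unit group of $R$. A property $P:R^n\to\{\text{true},\text{false}\}$ is left multiplicative if $P[ux]=P[x]$ for all $u\in R^\ast$, $x\in R^n$. A total order $<$ on $R$ is respectful if for all nonzero $x,y\in R$ with $Rx\supsetneq Ry$ there is $\alpha\in R^\ast$ with $\alpha x<uy$ for all $u\in R^\ast$. Fix an ordered basis $B=(b_1,\dots,b_n)$ of the free left module $R^n$; put $V_0=\{0\}$ and $V_i=Rb_1+\dots+Rb_i$. The lexicographic order on $R^n$: if $x\in V_{i-1}$ and $y\in V_i\setminus V_{i-1}$ then $x<y$; if $x\ne y$ both lie in $V_i\setminus V_{i-1}$, write $x=\sum_{j\le i}x_jb_j$, $y=\sum_{j\le i}y_jb_j$, let $k$ be the largest index with $x_k\ne y_k$, and set $x<y$ iff $x_k<y_k$ in $R$. Fix a set $\Gamma\subseteq R$ containing one generator of each nonzero left ideal of $R$. Greedy algorithm: $C_0=\{0\}$; for $i=1,\dots,n$, let $a_i$ be the smallest vector of $V_i\setminus V_{i-1}$ (if any) such that $P[\gamma a_i+c]$ is true for all $\gamma\in\Gamma$ and all $c\in C_{i-1}$; if such $a_i$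 exists set $C_i=Ra_i+C_{i-1}$, otherwise $C_i=C_{i-1}$. The lexicode is $C(<,B,P):=C_n$. *)

theory Defs
  imports Main
begin

text \<open>The ring R is a type 'a of class ring_1 (possibly noncommutative) with finite.
  R^n is modelled as functions nat => 'a vanishing from index n on.
  Indices are 0-based: basis vector B j (j < n) is the paper's b_(j+1).\<close>

definition is_unit :: "'a::ring_1 \<Rightarrow> bool" where
  "is_unit u \<longleftrightarrow> (\<exists>v. u * v = 1 \<and> v * u = 1)"

definition left_ideal :: "'a::ring_1 set \<Rightarrow> bool" where
  "left_ideal I \<longleftrightarrow> 0 \<in> I \<and> (\<forall>x\<in>I. \<forall>y\<in>I. x + y \<in> I) \<and> (\<forall>r. \<forall>x\<in>I. r * x \<in> I)"

definition lgen :: "'a::ring_1 \<Rightarrow> 'a set" where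
  "lgen x = {r * x | r. True}"

definition principal_left_ideal_ring :: "'a::ring_1 itself \<Rightarrow> bool" where
  "principal_left_ideal_ring _ \<longleftrightarrow> (\<forall>I::'a set. left_ideal I \<longrightarrow> (\<exists>x. I = lgen x))"

definition strict_total_order :: "('a \<Rightarrow> 'a \<Rightarrow> bool) \<Rightarrow> bool" where
  "strict_total_order lt \<longleftrightarrow> (\<forall>x. \<not> lt x x) \<and> (\<forall>x y z. lt x y \<longrightarrow> lt y z \<longrightarrow> lt x z)
     \<and> (\<forall>x y. x \<noteq> y \<longrightarrow> lt x y \<or> lt y x)"

definition respectful :: "('a::ring_1 \<Rightarrow> 'a \<Rightarrow> bool) \<Rightarrow> bool" where
  "respectful lt \<longleftrightarrow> strict_total_order lt \<and>
     (\<forall>x y. x \<noteq> 0 \<longrightarrow> y \<noteq> 0 \<longrightarrow> lgen y \<subset> lgen x \<longrightarrow>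
        (\<exists>\<alpha>. is_unit \<alpha> \<and> (\<forall>u. is_unit u \<longrightarrow> lt (\<alpha> * x) (u * y))))"

definition carrier_vec :: "nat \<Rightarrow> (nat \<Rightarrow> 'a::zero) set" where
  "carrier_vec n = {x. \<forall>k\<ge>n. x k = 0}"

definition smult :: "'a::ring_1 \<Rightarrow> (nat \<Rightarrow> 'a) \<Rightarrow> (nat \<Rightarrow> 'a)" where
  "smult r x = (\<lambda>k. r * x k)"

definition vadd :: "(nat \<Rightarrow> 'a::ring_1) \<Rightarrow> (nat \<Rightarrow> 'a) \<Rightarrow> (nat \<Rightarrow> 'a)" where
  "vadd x y = (\<lambda>k. x k + y k)"

definition lincomb :: "nat \<Rightarrow> (nat \<Rightarrow> 'a::ring_1) \<Rightarrow> (nat \<Rightarrow> nat \<Rightarrow> 'a) \<Rightarrow> (nat \<Rightarrow> 'a)" where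
  "lincomb i c B = (\<lambda>k. \<Sum>j<i. c j * B j k)"

definition left_submodule :: "nat \<Rightarrow> (nat \<Rightarrow> 'a::ring_1) set \<Rightarrow> bool" where
  "left_submodule n C \<longleftrightarrow> C \<subseteq> carrier_vec n \<and> (\<lambda>k. 0) \<in> C \<and>
     (\<forall>x\<in>C. \<forall>y\<in>C. vadd x y \<in> C) \<and> (\<forall>r. \<forall>x\<in>C. smult r x \<in> C)"

definition is_ordered_basis :: "nat \<Rightarrow> (nat \<Rightarrow> nat \<Rightarrow> 'a::ring_1) \<Rightarrow> bool" where
  "is_ordered_basis n B \<longleftrightarrow> (\<forall>j<n. B j \<in> carrier_vec n) \<and>
     (\<forall>x\<in>carrier_vec n. \<exists>!c. (\<forall>j\<ge>n. c j = 0) \<and> x = lincomb n c B)"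

definition coord :: "nat \<Rightarrow> (nat \<Rightarrow> nat \<Rightarrow> 'a::ring_1) \<Rightarrow> (nat \<Rightarrow> 'a) \<Rightarrow> nat \<Rightarrow> 'a" where
  "coord n B x = (THE c. (\<forall>j\<ge>n. c j = 0) \<and> x = lincomb n c B)"

definition Vsp :: "(nat \<Rightarrow> nat \<Rightarrow> 'a::ring_1) \<Rightarrow> nat \<Rightarrow> (nat \<Rightarrow> 'a) set" where
  "Vsp B i = {lincomb i c B | c. True}"

definition level :: "(nat \<Rightarrow> nat \<Rightarrow> 'a::ring_1) \<Rightarrow> (nat \<Rightarrow> 'a) \<Rightarrow> nat" where
  "level B x = (LEAST i. x \<in> Vsp B i)"

definition lexless :: "nat \<Rightarrow> ('a::ring_1 \<Rightarrow> 'a \<Rightarrow> bool) \<Rightarrow> (nat \<Rightarrow> nat \<Rightarrow> 'a)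
    \<Rightarrow> (nat \<Rightarrow> 'a) \<Rightarrow> (nat \<Rightarrow> 'a) \<Rightarrow> bool" where
  "lexless n lt B x y \<longleftrightarrow>
     level B x < level B y \<or>
     (level B x = level B y \<and> x \<noteq> y \<and>
       (let k = (GREATEST k. k < n \<and> coord n B x k \<noteq> coord n B y k)
        in lt (coord n B x k) (coord n B y k)))"

definition generator_system :: "'a::ring_1 set \<Rightarrow> bool" where
  "generator_system \<Gamma> \<longleftrightarrow> (\<forall>\<gamma>\<in>\<Gamma>. \<gamma> \<noteq> 0) \<and>
     (\<forall>I. left_ideal I \<longrightarrow> I \<noteq> {0} \<longrightarrow> (\<exists>!\<gamma>. \<gamma> \<in> \<Gamma> \<and> lgen \<gamma> = I))"

definition candidates :: "(nat \<Rightarrow> nat \<Rightarrow> 'a::ring_1) \<Rightarrow> ((nat \<Rightarrow> 'a) \<Rightarrow> bool) \<Rightarrow> 'a set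
    \<Rightarrow> nat \<Rightarrow> (nat \<Rightarrow> 'a) set \<Rightarrow> (nat \<Rightarrow> 'a) set" where
  "candidates B P \<Gamma> i C = {a \<in> Vsp B i - Vsp B (i - 1).
      \<forall>\<gamma>\<in>\<Gamma>. \<forall>c\<in>C. P (vadd (smult \<gamma> a) c)}"

primrec greedy :: "nat \<Rightarrow> ('a::ring_1 \<Rightarrow> 'a \<Rightarrow> bool) \<Rightarrow> (nat \<Rightarrow> nat \<Rightarrow> 'a)
    \<Rightarrow> ((nat \<Rightarrow> 'a) \<Rightarrow> bool) \<Rightarrow> 'a set \<Rightarrow> nat \<Rightarrow> (nat \<Rightarrow> 'a) set" where
  "greedy n lt B P \<Gamma> 0 = {(\<lambda>k. 0)}"
| "greedy n lt B P \<Gamma> (Suc i) =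
    (let C = greedy n lt B P \<Gamma> i; S = candidates B P \<Gamma> (Suc i) C in
     if S = {} then C
     else (let a = (THE a. a \<in> S \<and> (\<forall>b\<in>S. b \<noteq> a \<longrightarrow> lexless n lt B a b))
           in {vadd (smult r a) c | r c. c \<in> C}))"

definition lexicode :: "nat \<Rightarrow> ('a::ring_1 \<Rightarrow> 'a \<Rightarrow> bool) \<Rightarrow> (nat \<Rightarrow> nat \<Rightarrow> 'a)
    \<Rightarrow> ((nat \<Rightarrow> 'a) \<Rightarrow> bool) \<Rightarrow> 'a set \<Rightarrow> (nat \<Rightarrow> 'a) set" where
  "lexicode n lt B P \<Gamma> = greedy n lt B P \<Gamma> n"

definition left_multiplicative :: "nat \<Rightarrow> ((nat \<Rightarrow> 'a::ring_1) \<Rightarrow> bool) \<Rightarrow> bool" where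
  "left_multiplicative n P \<longleftrightarrow>
     (\<forall>u x. is_unit u \<longrightarrow> x \<in> carrier_vec n \<longrightarrow> P (smult u x) = P x)"

end

theory Submission
  imports Defs
begin

text \<open>By induction on \<open>i\<close>, every left submodule \<open>C \<supseteq> C(<,B,P)\<close> on which \<open>P\<close> holds
  satisfies \<open>C \<inter> V\<^sub>i \<subseteq> C\<^sub>i\<close>. An element \<open>x \<in> C\<close> of the layer \<open>V\<^bsub>i+1\<^esub> - V\<^sub>i\<close> is itself a
  candidate, so the greedy step picks a least candidate \<open>a\<close>, which again lies in \<open>C\<close>. The
  leading coefficients of \<open>C \<inter> V\<^bsub>i+1\<^esub>\<close> form a principal left ideal \<open>R\<delta>\<close> containing the
  leading coefficient \<open>\<beta>\<close> of \<open>a\<close>. If \<open>R\<beta> \<subset> R\<delta>\<close>, respectfulness gives a unit \<open>\<alpha>\<close> with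
  \<open>\<alpha>\<delta> < \<beta>\<close>, and the corresponding multiple of an element of \<open>C\<close> is a smaller candidate. So
  the leading coefficient of \<open>x\<close> is some \<open>r\<beta>\<close>, and \<open>x - ra \<in> C \<inter> V\<^sub>i \<subseteq> C\<^sub>i\<close>.

  That \<open>P\<close> holds on \<open>Ra + C\<^sub>i\<close> although only the generators \<open>\<gamma> \<in> \<Gamma>\<close> are tested rests on a
  fact about finite rings: \<open>Rr = R\<gamma>\<close> implies \<open>r = u\<gamma>\<close> for a unit \<open>u\<close>. It follows from the
  cancellation law for equivalent idempotents (\<open>Re \<oplus> Rh \<cong> Rf \<oplus> Rk\<close> and \<open>Re \<cong> Rf\<close> imply
  \<open>Rh \<cong> Rk\<close>), proved by induction on \<open>|eR|\<close> down to primitive \<open>e\<close>, where every element of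
  the corner ring \<open>eRe\<close> is invertible or nilpotent.\<close>

section \<open>Equivalent idempotents\<close>

lemma mult_eq_imp_mult_assoc:
  fixes a b c :: "'a::ring_1"
  shows "a * b = c \<Longrightarrow> a * (b * z) = c * z"
  by (simp add: mult.assoc[symmetric])

text \<open>The witnesses \<open>x \<in> fRe\<close> and \<open>y \<in> eRf\<close> act by right multiplication as mutually inverse
  isomorphisms between the left ideals \<open>Re\<close> and \<open>Rf\<close>.\<close>
definition idem_equiv :: "'a::ring_1 \<Rightarrow> 'a \<Rightarrow> bool" where
  "idem_equiv e f \<longleftrightarrow> (\<exists>x y. f*x = x \<and> x*e = x \<and> e*y = y \<and> y*f = y \<and> y*x = e \<and> x*y = f)"

definition orthogonal :: "'a::ring_1 \<Rightarrow> 'a \<Rightarrow> bool" where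
  "orthogonal e h \<longleftrightarrow> e*h = 0 \<and> h*e = 0"

definition primitive_idem :: "'a::ring_1 \<Rightarrow> bool" where
  "primitive_idem e \<longleftrightarrow> (\<forall>q. q*q = q \<and> e*q = q \<and> q*e = q \<longrightarrow> q = 0 \<or> q = e)"

definition corner_unit :: "'a::ring_1 \<Rightarrow> 'a \<Rightarrow> bool" where
  "corner_unit e p \<longleftrightarrow> (\<exists>p'. e*p' = p' \<and> p'*e = p' \<and> p'*p = e \<and> p*p' = e)"

lemma idem_equivE:
  assumes "idem_equiv e f"
  obtains x y where "f*x = x" "x*e = x" "e*y = y" "y*f = y" "y*x = e" "x*y = f"
  using assms idem_equiv_def by blast

lemma idem_equivI:
  assumes "f*x = x" "x*e = x" "e*y = y" "y*f = y" "y*x = e" "x*y = f"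
  shows "idem_equiv e f"
  unfolding idem_equiv_def using assms by blast

lemma idem_equiv_idem_right: "idem_equiv e f \<Longrightarrow> f*f = f"
  by (metis idem_equivE mult_eq_imp_mult_assoc)

lemma idem_equiv_refl: "e*e = e \<Longrightarrow> idem_equiv e e"
  by (rule idem_equivI[of e e e]) auto

lemma idem_equiv_sym: "idem_equiv e f \<Longrightarrow> idem_equiv f e"
  by (metis idem_equivE idem_equivI)

lemma idem_equiv_trans:
  assumes "idem_equiv e f" "idem_equiv f g"
  shows "idem_equiv e g"
proof -
  obtain x y where a: "f*x = x" "x*e = x" "e*y = y" "y*f = y" "y*x = e" "x*y = f"
    using assms(1) idem_equivE by blast
  obtain x' y' where b: "g*x' = x'" "x'*f = x'" "f*y' = y'" "y'*g = y'" "y'*x' = f" "x'*y' = g"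
    using assms(2) idem_equivE by blast
  show ?thesis
    by (rule idem_equivI[of g "x'*x" e "y*y'"])
       (simp_all add: mult.assoc a b a[THEN mult_eq_imp_mult_assoc] b[THEN mult_eq_imp_mult_assoc])
qed

lemma idem_equiv_add:
  assumes "orthogonal e h" "orthogonal f k" "idem_equiv e f" "idem_equiv h k"
  shows "idem_equiv (e + h) (f + k)"
proof -
  obtain x y where a: "f*x = x" "x*e = x" "e*y = y" "y*f = y" "y*x = e" "x*y = f"
    using assms(3) idem_equivE by blast
  obtain x' y' where b: "k*x' = x'" "x'*h = x'" "h*y' = y'" "y'*k = y'" "y'*x' = h" "x'*y' = k"
    using assms(4) idem_equivE by blast
  have o: "e*h = 0" "h*e = 0" "f*k = 0" "k*f = 0" using assms(1,2) orthogonal_def by auto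
  have c: "y*x' = 0" "y'*x = 0" "x*y' = 0" "x'*y = 0" "k*x = 0" "f*x' = 0" "x*h = 0" "x'*e = 0"
     "h*y = 0" "e*y' = 0" "y*k = 0" "y'*f = 0"
    by (metis a b o mult_eq_imp_mult_assoc mult_zero_left mult_zero_right)+
  show ?thesis
    by (rule idem_equivI[of "f+k" "x+x'" "e+h" "y+y'"])
       (simp_all add: distrib_left distrib_right a b c)
qed

lemma orthogonal_corner: "e*g = g \<Longrightarrow> g*e = g \<Longrightarrow> orthogonal e h \<Longrightarrow> orthogonal g h"
  unfolding orthogonal_def by (metis mult.assoc mult_zero_left mult_zero_right)

lemma orthogonal_add: "orthogonal a b \<Longrightarrow> orthogonal a c \<Longrightarrow> orthogonal a (b + c)"
  unfolding orthogonal_def by (simp add: distrib_left distrib_right)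

lemma idem_add_orthogonal: "a*a = a \<Longrightarrow> b*b = b \<Longrightarrow> orthogonal a b \<Longrightarrow> (a + b)*(a + b) = a + b"
  unfolding orthogonal_def by (simp add: distrib_left distrib_right)

lemma idem_equiv_restrict:
  assumes a: "f*s = s" "s*e = s" "e*t = t" "t*f = t" "t*s = e" "s*t = f"
    and "g*g = g" "e*g = g" "g*e = g"
  shows "idem_equiv g (s*g*t)" "f*(s*g*t) = s*g*t" "(s*g*t)*f = s*g*t"
proof -
  have a': "f*(s*w) = s*w" "s*(e*w) = s*w" "e*(t*w) = t*w" "t*(f*w) = t*w"
    "t*(s*w) = e*w" "s*(t*w) = f*w" for w
    using a by (simp_all add: mult.assoc[symmetric])
  have g': "g*(g*w) = g*w" "e*(g*w) = g*w" "g*(e*w) = g*w" for w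
    using assms(7-9) by (simp_all add: mult.assoc[symmetric])
  show "idem_equiv g (s*g*t)"
    by (rule idem_equivI[of "s*g*t" "s*g" g "g*t"]) (simp_all add: mult.assoc a a' g' assms)
  show "f*(s*g*t) = s*g*t" "(s*g*t)*f = s*g*t" using a a' by (simp_all add: mult.assoc)
qed

section \<open>Idempotents in finite rings\<close>

lemma power_eventually_periodic:
  fixes p :: "'a::{monoid_mult,finite}"
  obtains i d where "d > 0" "p^(i + d) = p^i"
proof -
  have "\<not> inj (\<lambda>n::nat. p^n)"
    using finite_imageD[of "\<lambda>n::nat. p^n" UNIV] infinite_UNIV_nat by auto
  then obtain m m' where "m \<noteq> m'" "p^m = p^m'" unfolding inj_def by blast
  then show ?thesis
    using that[of "m - m'" m'] that[of "m' - m" m] by (cases "m < m'") auto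
qed

lemma power_periodic_shift:
  fixes p :: "'a::monoid_mult"
  assumes "p^(i + d) = p^i"
  shows "p^(i + k + q*d) = p^(i + k)"
proof (induction q)
  case (Suc q)
  have "p^(i + k + Suc q * d) = p^(i + d) * p^(k + q*d)"
    by (simp add: power_add[symmetric] algebra_simps)
  also have "\<dots> = p^(i + k + q*d)"
    using assms by (simp add: power_add[symmetric] algebra_simps)
  finally show ?case using Suc by simp
qed simp

lemma idempotent_power:
  fixes p :: "'a::{monoid_mult,finite}"
  obtains m where "m \<ge> 1" "p^m * p^m = p^m"
proof -
  obtain i d where d: "d > 0" "p^(i + d) = p^i" using power_eventually_periodic by blast
  define m where "m = (i + 1) * d"
  have m1: "m \<ge> i + 1" unfolding m_def using mult_le_mono2[of 1 d "i + 1"] d(1) by simp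
  have "p^m * p^m = p^(i + (m - i) + (i + 1) * d)"
    using m1 by (simp add: power_add[symmetric] m_def)
  also have "\<dots> = p^m" using m1 by (subst power_periodic_shift[OF d(2)]) simp
  finally show ?thesis using that[of m] m1 by simp
qed

lemma corner_power:
  fixes p :: "'a::monoid_mult"
  assumes "e*p = p" "p*e = p"
  shows "e*p^(Suc k) = p^(Suc k)" "p^(Suc k)*e = p^(Suc k)"
proof -
  show "e*p^(Suc k) = p^(Suc k)" using assms(1) by (simp add: mult.assoc[symmetric])
  show "p^(Suc k)*e = p^(Suc k)" using assms(2) by (simp only: power_Suc2 mult.assoc)
qed

lemma corner_unit_or_nilpotent:
  fixes p :: "'a::{ring_1,finite}"
  assumes ee: "e*e = e" and ep: "e*p = p" "p*e = p" and "primitive_idem e"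
  shows "corner_unit e p \<or> (\<exists>N. p^N = 0)"
proof -
  obtain m where m: "m \<ge> 1" "p^m * p^m = p^m" using idempotent_power by blast
  obtain k where mk: "m = Suc k" using m(1) by (cases m) auto
  have "p^m = 0 \<or> p^m = e"
    using assms(4) m(2) corner_power[OF ep] mk unfolding primitive_idem_def by blast
  moreover have "corner_unit e p" if pe: "p^m = e"
    unfolding corner_unit_def
  proof (rule exI[of _ "e*p^k*e"], intro conjI)
    show "e * (e * p^k * e) = e * p^k * e" using ee by (simp add: mult.assoc[symmetric])
    show "e * p^k * e * e = e * p^k * e" using ee by (simp add: mult.assoc)
    show "e * p^k * e * p = e" "p * (e * p^k * e) = e"
      using pe mk ep by (metis mult.assoc power_Suc2, metis mult.assoc power_Suc)
  qed
  ultimately show ?thesis by blast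
qed

lemma one_minus_mult_geometric_sum:
  fixes c :: "'a::ring_1"
  shows "(1 - c) * (\<Sum>i<N. c^i) = 1 - c^N"
proof (induction N)
  case (Suc N)
  have "(1 - c) * (\<Sum>i<Suc N. c^i) = (1 - c) * (\<Sum>i<N. c^i) + (1 - c) * c^N"
    by (simp add: distrib_left)
  also have "\<dots> = 1 - c^Suc N" using Suc by (simp add: algebra_simps)
  finally show ?case .
qed simp

lemma geometric_sum_mult_one_minus:
  fixes c :: "'a::ring_1"
  shows "(\<Sum>i<N. c^i) * (1 - c) = 1 - c^N"
proof (induction N)
  case (Suc N)
  have "(\<Sum>i<Suc N. c^i) * (1 - c) = (\<Sum>i<N. c^i) * (1 - c) + c^N * (1 - c)"
    by (simp add: distrib_right)
  also have "\<dots> = 1 - c^Suc N" using Suc by (simp add: algebra_simps power_Suc2 power_commutes)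
  finally show ?case .
qed simp

lemma corner_unit_one_minus_nilpotent:
  fixes c :: "'a::ring_1"
  assumes ee: "e*e = e" and ec: "e*c = c" "c*e = c" and N: "c^N = 0"
  shows "corner_unit e (e - c)"
proof -
  define S where "S = (\<Sum>i<N. c^i)"
  have "e*c^i = c^i*e" for i
    by (induction i) (simp_all add: ec mult.assoc[symmetric], metis ec(2) mult.assoc)
  then have eS: "e*S = S*e"
    unfolding S_def by (simp add: sum_distrib_left sum_distrib_right)
  have S: "(1 - c)*S = 1" "S*(1 - c) = 1" unfolding S_def
    using one_minus_mult_geometric_sum[of c N] geometric_sum_mult_one_minus[of c N] N by simp_all
  have d: "e - c = e*(1 - c)" "e - c = (1 - c)*e" using ec by (simp_all add: algebra_simps)
  show ?thesis unfolding corner_unit_def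
  proof (rule exI[of _ "e*S"], intro conjI)
    show "e*(e*S) = e*S" using ee by (simp add: mult.assoc[symmetric])
    have "e*S*e = e*(e*S)" by (simp only: mult.assoc eS[symmetric])
    then show "e*S*e = e*S" using ee by (simp add: mult.assoc[symmetric])
    have "e*S*(e - c) = e*(S*(1 - c))*e" by (simp only: d(2) mult.assoc)
    then show "e*S*(e - c) = e" using S ee by simp
    have "(e - c)*(e*S) = e*((1 - c)*S)*e" by (simp only: d eS mult.assoc)
    then show "(e - c)*(e*S) = e" using S ee by simp
  qed
qed

lemma corner_unit_of_sum:
  fixes c :: "'a::{ring_1,finite}"
  assumes "e*e = e" "e*c = c" "c*e = c" "primitive_idem e" "c + d = e"
  shows "corner_unit e c \<or> corner_unit e d"
  using corner_unit_or_nilpotent[OF assms(1-4)] corner_unit_one_minus_nilpotent[OF assms(1-3)] assms(5)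
  by (metis add_diff_cancel_left')

lemma corner_subset:
  fixes e g :: "'a::ring_1"
  assumes "e*g = g"
  shows "{r. g*r = r} \<subseteq> {r. e*r = r}"
proof
  fix r assume "r \<in> {r. g*r = r}"
  then have "e*r = (e*g)*r" by (simp add: mult.assoc)
  then show "r \<in> {r. e*r = r}" using assms \<open>r \<in> _\<close> by simp
qed

lemma idem_equiv_corner_eq:
  fixes q :: "'a::{ring_1,finite}"
  assumes "f*q = q" "q*f = q" "idem_equiv q f"
  shows "q = f"
proof -
  obtain x y where a: "f*x = x" "x*q = x" "q*y = y" "y*f = y" "y*x = q" "x*y = f"
    using assms(3) idem_equivE by blast
  have "inj_on (\<lambda>r. y*r) {r. f*r = r}"
  proof (rule inj_onI)
    fix r r' assume "r \<in> {r. f*r = r}" "r' \<in> {r. f*r = r}" "y*r = y*r'"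
    then have "(x*y)*r = (x*y)*r'" by (simp add: mult.assoc)
    then show "r = r'" using a(6) \<open>r \<in> _\<close> \<open>r' \<in> _\<close> by simp
  qed
  moreover have "(\<lambda>r. y*r) ` {r. f*r = r} \<subseteq> {r. q*r = r}"
    using a(3) by (auto simp: mult.assoc[symmetric])
  ultimately have "card {r. f*r = r} \<le> card {r. q*r = r}"
    by (simp add: card_inj_on_le)
  moreover have sub: "{r. q*r = r} \<subseteq> {r. f*r = r}" using corner_subset[OF assms(1)] .
  moreover have "card {r. q*r = r} \<le> card {r. f*r = r}" using sub by (intro card_mono) simp_all
  ultimately have "{r. q*r = r} = {r. f*r = r}" by (intro card_subset_eq) auto
  moreover have "f*f = f" using idem_equiv_idem_right[OF assms(3)] .
  ultimately have "q*f = f" by blast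
  then show ?thesis using assms(2) by simp
qed

lemma card_corner_less:
  fixes e :: "'a::{ring_1,finite}"
  assumes "e*e = e" "e*g = g" "g*e = g" "g \<noteq> e"
  shows "card {r. g*r = r} < card {r. e*r = r}"
proof (rule psubset_card_mono)
  have "e \<in> {r. e*r = r}" "e \<notin> {r. g*r = r}" using assms by auto
  then show "{r. g*r = r} \<subset> {r. e*r = r}" using corner_subset[OF assms(2)] by blast
qed simp

text \<open>In block form with respect to \<open>e + h\<close> and \<open>f + k\<close>, \<open>x\<close> has the invertible corner \<open>fxe\<close>
  (inverse \<open>z\<close>); its Schur complement \<open>kxh - kxe z fxh\<close> is then inverse to \<open>hyk\<close>.\<close>
lemma idem_equiv_complement:
  fixes x y :: "'a::ring_1"
  assumes ee: "e*e = e" and hh: "h*h = h" and ff: "f*f = f" and kk: "k*k = k"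
    and "orthogonal e h" and "orthogonal f k"
    and x: "(f + k)*x = x" "x*(e + h) = x" and y: "(e + h)*y = y" "y*(f + k) = y"
    and yx: "y*x = e + h" and xy: "x*y = f + k"
    and z: "e*z = z" "z*f = z" and zA: "z*(f*x*e) = e" and Az: "(f*x*e)*z = f"
  shows "idem_equiv h k"
proof -
  have eh: "e*h = 0" "h*e = 0" and fk: "f*k = 0" "k*f = 0"
    using assms(5,6) orthogonal_def by auto
  have zA': "z*(f*(x*(e*w))) = e*w" and Az': "f*(x*(e*(z*w))) = f*w" for w
    using zA Az by (simp_all add: mult.assoc[symmetric])
  have R: "e*(e*w) = e*w" "h*(h*w) = h*w" "f*(f*w) = f*w" "k*(k*w) = k*w"
          "e*(h*w) = 0" "h*(e*w) = 0" "f*(k*w) = 0" "k*(f*w) = 0" for w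
    using ee hh ff kk eh fk by (simp_all add: mult.assoc[symmetric])
  define D where "D = k*x*h - k*x*e*z*f*x*h"
  define Y where "Y = h*y*k"
  have xhyk: "x*(h*(y*k)) = k - x*(e*(y*k))"
  proof -
    have "h*y = y - e*y" using y(1) by (simp add: algebra_simps)
    then have "h*(y*w) = y*w - e*(y*w)" for w
      by (simp add: mult.assoc[symmetric] left_diff_distrib)
    then have "x*(h*(y*k)) = x*(y*k) - x*(e*(y*k))" by (simp add: right_diff_distrib)
    moreover have "x*(y*k) = k" using xy fk kk by (simp add: mult.assoc[symmetric] distrib_right)
    ultimately show ?thesis by simp
  qed
  have hykx: "h*(y*(k*x)) = h - h*(y*(f*x))"
  proof -
    have "y*k = y - y*f" using y(2) by (simp add: algebra_simps)
    then have "h*(y*(k*x)) = h*(y*x) - h*(y*(f*x))"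
      by (simp only: mult.assoc[symmetric] right_diff_distrib left_diff_distrib)
    then show ?thesis using yx eh hh by (simp add: algebra_simps)
  qed
  show ?thesis
  proof (rule idem_equivI[of k D h Y])
    show "k*D = D" unfolding D_def by (simp add: right_diff_distrib mult.assoc R)
    show "D*h = D" unfolding D_def using hh by (simp add: left_diff_distrib mult.assoc)
    show "h*Y = Y" unfolding Y_def by (simp add: mult.assoc R)
    show "Y*k = Y" unfolding Y_def using kk by (simp add: mult.assoc)
    have "D*Y = k*(x*(h*(y*k))) - k*(x*(e*(z*(f*(x*(h*(y*k)))))))"
      unfolding D_def Y_def by (simp add: left_diff_distrib mult.assoc R)
    also have "\<dots> = k*(k - x*(e*(y*k))) - k*(x*(e*(z*(f*(k - x*(e*(y*k)))))))"
      by (simp only: xhyk)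
    also have "\<dots> = k" by (simp add: right_diff_distrib R zA' kk fk)
    finally show "D*Y = k" .
    have "Y*D = h*(y*(k*x))*h - h*(y*(k*x))*(e*(z*(f*(x*h))))"
      unfolding D_def Y_def by (simp add: right_diff_distrib mult.assoc R)
    also have "\<dots> = (h - h*(y*(f*x)))*h - (h - h*(y*(f*x)))*(e*(z*(f*(x*h))))"
      by (simp only: hykx)
    also have "\<dots> = h" by (simp add: left_diff_distrib mult.assoc R Az' hh eh)
    finally show "Y*D = h" .
  qed
qed

lemma idem_equiv_split_off:
  fixes x y :: "'a::ring_1"
  assumes ee: "e*e = e" and hh: "h*h = h" and "orthogonal e h"
    and FF: "F*F = F" and gg: "g*g = g" and gF: "F*g = g" "g*F = g"
    and x: "F*x = x" "x*(e + h) = x" and y: "(e + h)*y = y" "y*F = y"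
    and yx: "y*x = e + h" and xy: "x*y = F"
    and "corner_unit e (e*y*g*x*e)"
  obtains g1 where "g*g1 = g1" "g1*g = g1" "idem_equiv e g1" "idem_equiv h (F - g1)"
proof -
  obtain c' where c': "e*c' = c'" "c'*e = c'" "c'*(e*y*g*x*e) = e"
    using assms(14) corner_unit_def by blast
  define z where "z = c'*y*g"
  define A where "A = g*x*e"
  define g1 where "g1 = A*z"
  have "c'*(e*w) = c'*w" "g*(g*w) = g*w" for w
    using c'(2) gg by (metis mult.assoc)+
  then have zA: "z*A = e" and zxe: "z*(x*e) = e"
    using c'(3) unfolding z_def A_def by (simp_all add: mult.assoc)
  have z: "e*z = z" "z*g = z" unfolding z_def using c'(1) gg
    by (simp add: mult.assoc[symmetric], simp add: mult.assoc)
  have A: "g*A = A" "A*e = A" unfolding A_def using gg ee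
    by (simp add: mult.assoc[symmetric], simp add: mult.assoc)
  have eg1: "idem_equiv e g1"
    by (rule idem_equivI[of g1 A e z])
       (simp_all add: g1_def zA z A mult.assoc, simp_all add: zA z A mult.assoc[symmetric])
  have g1: "g1*g1 = g1" using idem_equiv_idem_right[OF eg1] .
  have g1g: "g*g1 = g1" "g1*g = g1" unfolding g1_def using A z
    by (simp add: mult.assoc[symmetric], simp add: mult.assoc)
  have g1F: "F*g1 = g1" "g1*F = g1"
    using g1g gF by (metis mult.assoc)+
  have "idem_equiv h (F - g1)"
  proof (rule idem_equiv_complement[OF ee hh g1 _ assms(3) _ _ _ _ _ yx _ z(1)])
    show "(F - g1)*(F - g1) = F - g1" using FF g1 g1F by (simp add: algebra_simps)
    show "orthogonal g1 (F - g1)" using g1 g1F by (simp add: algebra_simps orthogonal_def)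
    have g1xe: "g1*x*e = A" unfolding g1_def using zxe A(2) by (simp add: mult.assoc)
    show "z*(g1*x*e) = e" "(g1*x*e)*z = g1" unfolding g1xe using zA g1_def by simp_all
    show "z*g1 = z" unfolding g1_def using zA z(1) by (simp add: mult.assoc[symmetric])
  qed (use x y xy in simp_all)
  then show ?thesis using that g1g eg1 by simp
qed

lemma idem_equiv_cancel_primitive:
  fixes e :: "'a::{ring_1,finite}"
  assumes ee: "e*e = e" and hh: "h*h = h" and ff: "f*f = f" and kk: "k*k = k"
    and oeh: "orthogonal e h" and ofk: "orthogonal f k"
    and ef: "idem_equiv e f" and ehfk: "idem_equiv (e + h) (f + k)" and "primitive_idem e"
  shows "idem_equiv h k"
proof -
  obtain x y where x: "(f + k)*x = x" "x*(e + h) = x" and y: "(e + h)*y = y" "y*(f + k) = y"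
    and yx: "y*x = e + h" and xy: "x*y = f + k"
    using ehfk idem_equivE by blast
  have eh: "e*h = 0" "h*e = 0" and fk: "f*k = 0" "k*f = 0"
    using oeh ofk orthogonal_def by auto
  have FF: "(f + k)*(f + k) = f + k" using idem_add_orthogonal[OF ff kk ofk] .
  have sub: "(f + k)*f = f" "f*(f + k) = f" "(f + k)*k = k" "k*(f + k) = k"
    using ff kk fk by (simp_all add: algebra_simps)
  note split = idem_equiv_split_off[OF ee hh oeh FF _ _ _ x y yx xy]
  define c where "c = e*y*f*x*e"
  have "e*y*f*x*e + e*y*k*x*e = e*(y*((f + k)*(x*e)))" by (simp add: algebra_simps)
  also have "\<dots> = e" using x(1) yx ee eh by (simp add: mult.assoc[symmetric] algebra_simps)
  finally have "c + e*y*k*x*e = e" unfolding c_def .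
  moreover have "e*c = c" "c*e = c" unfolding c_def using ee
    by (simp add: mult.assoc[symmetric], simp add: mult.assoc)
  ultimately consider "corner_unit e c" | "corner_unit e (e*y*k*x*e)"
    using corner_unit_of_sum[OF ee _ _ assms(9)] by blast
  then show ?thesis
  proof cases
    case 1
    then obtain g1 where g1: "f*g1 = g1" "g1*f = g1" "idem_equiv e g1" "idem_equiv h (f + k - g1)"
      using split[OF ff sub(1,2)] unfolding c_def by blast
    have "g1 = f"
      using idem_equiv_corner_eq[OF g1(1,2)] idem_equiv_trans[OF idem_equiv_sym[OF g1(3)] ef] by blast
    then show ?thesis using g1(4) by simp
  next
    case 2
    then obtain g1 where g1: "k*g1 = g1" "g1*k = g1" "idem_equiv e g1" "idem_equiv h (f + k - g1)"
      using split[OF kk sub(3,4)] by blast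
    have "orthogonal f (k - g1)" "orthogonal g1 (k - g1)" "(k - g1)*(k - g1) = k - g1"
      using g1(1,2) fk idem_equiv_idem_right[OF g1(3)] kk unfolding orthogonal_def
      by (simp_all add: algebra_simps, metis mult.assoc mult_zero_left mult_zero_right)+
    then have "idem_equiv (f + (k - g1)) (g1 + (k - g1))"
      using idem_equiv_add idem_equiv_trans[OF idem_equiv_sym[OF ef] g1(3)] idem_equiv_refl by blast
    then show ?thesis using g1(4) idem_equiv_trans by (simp add: algebra_simps)
  qed
qed

lemma idem_equiv_split_corner:
  fixes e :: "'a::ring_1"
  assumes ef: "idem_equiv e f" and ee: "e*e = e" and e1: "e1*e1 = e1" "e*e1 = e1" "e1*e = e1"
  obtains f1 where "f*f1 = f1" "f1*f = f1" "idem_equiv e1 f1" "idem_equiv (e - e1) (f - f1)"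
proof -
  obtain s t where st: "f*s = s" "s*e = s" "e*t = t" "t*f = t" "t*s = e" "s*t = f"
    using ef idem_equivE by blast
  have e2: "(e - e1)*(e - e1) = e - e1" "e*(e - e1) = e - e1" "(e - e1)*e = e - e1"
    using ee e1 by (simp_all add: algebra_simps)
  have "s*(e - e1)*t = f - s*e1*t"
    using st by (simp add: algebra_simps)
  then show ?thesis
    using that idem_equiv_restrict[OF st e1] idem_equiv_restrict[OF st e2] by metis
qed

lemma idem_equiv_cancel:
  fixes e :: "'a::{ring_1,finite}"
  assumes "e*e = e" "h*h = h" "f*f = f" "k*k = k" "orthogonal e h" "orthogonal f k"
    and "idem_equiv e f" "idem_equiv (e + h) (f + k)"
  shows "idem_equiv h k"
  using assms
proof (induction "card {r. e*r = r}" arbitrary: e h f k rule: less_induct)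
  case less
  note ee = less.prems(1) and hh = less.prems(2) and ff = less.prems(3) and kk = less.prems(4)
    and oeh = less.prems(5) and ofk = less.prems(6)
  show ?case
  proof (cases "primitive_idem e")
    case True
    then show ?thesis using idem_equiv_cancel_primitive less.prems by blast
  next
    case False
    then obtain e1 where e1: "e1*e1 = e1" "e*e1 = e1" "e1*e = e1" "e1 \<noteq> 0" "e1 \<noteq> e"
      unfolding primitive_idem_def by blast
    obtain f1 where f1: "f*f1 = f1" "f1*f = f1" "idem_equiv e1 f1" "idem_equiv (e - e1) (f - f1)"
      using idem_equiv_split_corner[OF less.prems(7) ee e1(1-3)] by blast
    define e2 where "e2 = e - e1"
    define f2 where "f2 = f - f1"
    have e2: "e2*e2 = e2" "e*e2 = e2" "e2*e = e2" "e2 \<noteq> e" "orthogonal e1 e2"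
      unfolding e2_def orthogonal_def using e1 ee by (simp_all add: algebra_simps)
    have f12: "f1*f1 = f1" "f2*f2 = f2" "f*f2 = f2" "f2*f = f2" "orthogonal f1 f2"
      using f1 idem_equiv_idem_right[OF f1(3)] idem_equiv_idem_right[OF f1(4)]
      unfolding f2_def orthogonal_def by (simp_all add: algebra_simps)
    have o: "orthogonal e1 h" "orthogonal e2 h" "orthogonal f1 k" "orthogonal f2 k"
      using orthogonal_corner e1(2,3) e2(2,3) f1(1,2) f12(3,4) oeh ofk by blast+
    have "idem_equiv (e2 + h) (f2 + k)"
    proof (rule less.hyps[of e1 "e2 + h" f1 "f2 + k"])
      show "card {r. e1*r = r} < card {r. e*r = r}" using card_corner_less[OF ee e1(2,3,5)] .
      show "idem_equiv (e1 + (e2 + h)) (f1 + (f2 + k))"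
        using less.prems(8) unfolding e2_def f2_def by simp
    qed (use e1 e2 f1 f12 o hh kk in \<open>auto intro: idem_add_orthogonal orthogonal_add\<close>)
    then show ?thesis
      using less.hyps[of e2 h f2 k] card_corner_less[OF ee e2(2-4)] e2 f12 o hh kk f1(4)
      unfolding e2_def f2_def by blast
  qed
qed

lemma idem_equiv_complement_unit:
  fixes s :: "'a::ring_1"
  assumes st: "f*s = s" "s*e = s" "e*t = t" "t*f = t" "t*s = e" "s*t = f"
    and "idem_equiv (1 - e) (1 - f)"
  obtains u where "is_unit u" "u*e = s"
proof -
  obtain x y where xy: "(1 - f)*x = x" "x*(1 - e) = x" "(1 - e)*y = y" "y*(1 - f) = y"
    "y*x = 1 - e" "x*y = 1 - f"
    using assms(7) idem_equivE by blast
  have xe: "x*e = 0" "e*y = 0" "f*x = 0" "y*f = 0"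
    using xy by (simp_all add: algebra_simps)
  have "t*x = t*f*x" "y*s = y*f*s" "s*y = s*e*y" "x*t = x*e*t"
    using st by (simp_all add: mult.assoc)
  then have zero: "t*x = 0" "y*s = 0" "s*y = 0" "x*t = 0"
    using xe by (simp_all add: mult.assoc)
  have "is_unit (s + x)" unfolding is_unit_def
    using zero st xy by (intro exI[of _ "t + y"]) (simp add: algebra_simps)
  moreover have "(s + x)*e = s" using st xe by (simp add: distrib_right)
  ultimately show ?thesis using that by blast
qed

text \<open>In a finite ring, an embedding \<open>Re \<rightarrow> R\<close> with a left inverse extends to an automorphism
  of \<open>R\<close>: its image is \<open>Rf\<close> with \<open>e \<sim> f\<close>, and cancellation gives \<open>1 - e \<sim> 1 - f\<close>.\<close>
lemma unit_extends_corner_embedding: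
  fixes e :: "'a::{ring_1,finite}"
  assumes ee: "e*e = e" and se: "s*e = s" and et: "e*t = t" and ts: "t*s = e"
  obtains u where "is_unit u" "u*e = s"
proof -
  define f where "f = s*t"
  have fs: "f*s = s" "t*f = t"
    unfolding f_def using ts se et by (simp_all add: mult.assoc, simp add: mult.assoc[symmetric])
  have ef: "idem_equiv e f" by (rule idem_equivI[of f s e t]) (use fs se et ts f_def in auto)
  have ff: "f*f = f" using idem_equiv_idem_right[OF ef] .
  have "idem_equiv (1 - e) (1 - f)"
  proof (rule idem_equiv_cancel[OF ee _ ff _ _ _ ef])
    show "(1 - e)*(1 - e) = 1 - e" "(1 - f)*(1 - f) = 1 - f"
      using ee ff by (simp_all add: algebra_simps)
    show "orthogonal e (1 - e)" "orthogonal f (1 - f)"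
      unfolding orthogonal_def using ee ff by (simp_all add: algebra_simps)
    show "idem_equiv (e + (1 - e)) (f + (1 - f))" using idem_equiv_refl[of 1] by simp
  qed
  then show ?thesis
    using idem_equiv_complement_unit[OF fs(1) se et fs(2) ts] that f_def by blast
qed

lemma power_fixes: "p*b = (b::'a::monoid_mult) \<Longrightarrow> p^k*b = b"
  by (induction k) (simp_all add: mult.assoc)

text \<open>An idempotent power \<open>e\<close> of \<open>ts\<close> fixes \<open>b\<close>, and \<open>ts\<close> is invertible in \<open>eRe\<close>.\<close>
lemma associated_corner_embedding:
  fixes b :: "'a::{ring_1,finite}"
  assumes ab: "a = s*b" and ba: "b = t*a"
  obtains e s1 t1 where "e*e = e" "e*b = b" "s1*b = a" "s1*e = s1" "e*t1 = t1" "t1*s1 = e"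
proof -
  define p where "p = t*s"
  have pb: "p*b = b" unfolding p_def using ab ba by (simp add: mult.assoc)
  obtain m where m: "m \<ge> 1" "p^m * p^m = p^m" using idempotent_power by blast
  obtain j where mj: "m = Suc j" using m(1) by (cases m) auto
  define e where "e = p^m"
  have ee: "e*e = e" unfolding e_def using m(2) .
  have eb: "e*b = b" unfolding e_def using power_fixes[OF pb] .
  have ep: "e*p = p*e" unfolding e_def by (simp add: power_commutes)
  define s1 where "s1 = s*e"
  define t1 where "t1 = e*p^j*e*t"
  have "t1*s1 = e*p^j*(e*p)*e" unfolding t1_def s1_def p_def by (simp add: mult.assoc)
  also have "\<dots> = e*(p^j*p)*(e*e)" unfolding ep by (simp add: mult.assoc)
  also have "p^j*p = e" unfolding e_def mj by (simp add: power_Suc2 power_commutes)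
  finally have "t1*s1 = e" using ee by simp
  moreover have "s1*e = s1" unfolding s1_def using ee by (simp add: mult.assoc)
  moreover have "e*t1 = t1" unfolding t1_def using ee by (simp add: mult.assoc[symmetric])
  moreover have "s1*b = a" unfolding s1_def using eb ab by (simp add: mult.assoc)
  ultimately show ?thesis using that ee eb by blast
qed

lemma lgen_self: "r \<in> lgen (r::'a::ring_1)"
  unfolding lgen_def by (auto intro: exI[of _ 1])

lemma lgen_eq_imp_unit_multiple:
  fixes a b :: "'a::{ring_1,finite}"
  assumes "lgen a = lgen b"
  obtains u where "is_unit u" "a = u*b"
proof -
  obtain s t where "a = s*b" "b = t*a"
    using lgen_self[of a] lgen_self[of b] assms unfolding lgen_def by blast
  then obtain e s1 t1 where e: "e*e = e" "e*b = b" "s1*b = a" "s1*e = s1" "e*t1 = t1" "t1*s1 = e"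
    by (rule associated_corner_embedding)
  then obtain u where "is_unit u" "u*e = s1" using unit_extends_corner_embedding by metis
  then show ?thesis using that e(2,3) by (metis mult.assoc)
qed

section \<open>Coordinates with respect to an ordered basis\<close>

lemma carrier_vec_zero: "(\<lambda>k. 0) \<in> carrier_vec n"
  unfolding carrier_vec_def by simp

lemma carrier_vec_vadd: "x \<in> carrier_vec n \<Longrightarrow> y \<in> carrier_vec n \<Longrightarrow> vadd x y \<in> carrier_vec n"
  unfolding carrier_vec_def vadd_def by auto

lemma carrier_vec_smult: "x \<in> carrier_vec n \<Longrightarrow> smult r x \<in> carrier_vec n"
  unfolding carrier_vec_def smult_def by auto

lemma finite_carrier_vec: "finite (carrier_vec n :: (nat \<Rightarrow> 'a::{zero,finite}) set)"
proof -
  have "(carrier_vec n :: (nat \<Rightarrow> 'a) set) \<subseteq>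
      (\<lambda>xs k. if k < n then xs ! k else 0) ` {xs. set xs \<subseteq> UNIV \<and> length xs = n}"
  proof
    fix x :: "nat \<Rightarrow> 'a" assume "x \<in> carrier_vec n"
    then have "x = (\<lambda>k. if k < n then map x [0..<n] ! k else 0)" unfolding carrier_vec_def by auto
    then show "x \<in> (\<lambda>xs k. if k < n then xs ! k else 0) ` {xs. set xs \<subseteq> UNIV \<and> length xs = n}"
      by (intro image_eqI[of _ _ "map x [0..<n]"]) auto
  qed
  moreover have "finite {xs. set xs \<subseteq> (UNIV::'a set) \<and> length xs = n}"
    by (rule finite_lists_length_eq) simp
  ultimately show ?thesis by (meson finite_surj)
qed

lemma lincomb_carrier_vec:
  assumes "\<forall>j<n. B j \<in> carrier_vec n" "i \<le> n"
  shows "lincomb i c B \<in> carrier_vec n"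
  using assms unfolding carrier_vec_def lincomb_def by auto

lemma lincomb_cong: "(\<And>j. j < i \<Longrightarrow> c j = c' j) \<Longrightarrow> lincomb i c B = lincomb i c' B"
  unfolding lincomb_def by (intro ext sum.cong) auto

lemma lincomb_extend_zero:
  assumes "\<forall>j\<ge>i. c j = 0" "i \<le> m"
  shows "lincomb m c B = lincomb i c B"
  unfolding lincomb_def using assms by (intro ext sum.mono_neutral_right) auto

lemma lincomb_add: "lincomb i (\<lambda>j. c j + c' j) B = vadd (lincomb i c B) (lincomb i c' B)"
  unfolding lincomb_def vadd_def by (simp add: fun_eq_iff distrib_right sum.distrib)

lemma lincomb_smult: "lincomb i (\<lambda>j. r * c j) B = smult r (lincomb i c B)"
  unfolding lincomb_def smult_def by (simp add: fun_eq_iff sum_distrib_left mult.assoc)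

lemma coord_lincomb:
  assumes "is_ordered_basis n B" "x \<in> carrier_vec n"
  shows "\<forall>j\<ge>n. coord n B x j = 0" "x = lincomb n (coord n B x) B"
proof -
  have "\<exists>!c. (\<forall>j\<ge>n. c j = 0) \<and> x = lincomb n c B"
    using assms unfolding is_ordered_basis_def by blast
  then have "(\<forall>j\<ge>n. coord n B x j = 0) \<and> x = lincomb n (coord n B x) B"
    unfolding coord_def by (rule theI')
  then show "\<forall>j\<ge>n. coord n B x j = 0" "x = lincomb n (coord n B x) B" by auto
qed

lemma coord_eqI:
  assumes "is_ordered_basis n B" "x \<in> carrier_vec n" "\<forall>j\<ge>n. c j = 0" "x = lincomb n c B"
  shows "coord n B x = c"
proof -
  have "\<exists>!c. (\<forall>j\<ge>n. c j = 0) \<and> x = lincomb n c B"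
    using assms unfolding is_ordered_basis_def by blast
  then show ?thesis unfolding coord_def using assms(3,4) by (intro the1_equality) auto
qed

lemma coord_inj:
  assumes "is_ordered_basis n B" "x \<in> carrier_vec n" "y \<in> carrier_vec n" "coord n B x = coord n B y"
  shows "x = y"
  using coord_lincomb[OF assms(1,2)] coord_lincomb[OF assms(1,3)] assms(4) by metis

lemma coord_zero:
  assumes "is_ordered_basis n B"
  shows "coord n B (\<lambda>k. 0) = (\<lambda>j. 0)"
  by (rule coord_eqI[OF assms carrier_vec_zero]) (auto simp: lincomb_def)

lemma coord_vadd:
  assumes "is_ordered_basis n B" "x \<in> carrier_vec n" "y \<in> carrier_vec n"
  shows "coord n B (vadd x y) = (\<lambda>j. coord n B x j + coord n B y j)"
  using coord_lincomb[OF assms(1,2)] coord_lincomb[OF assms(1,3)]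
  by (intro coord_eqI[OF assms(1) carrier_vec_vadd[OF assms(2,3)]]) (simp_all add: lincomb_add)

lemma coord_smult:
  assumes "is_ordered_basis n B" "x \<in> carrier_vec n"
  shows "coord n B (smult r x) = (\<lambda>j. r * coord n B x j)"
  using coord_lincomb[OF assms(1,2)]
  by (intro coord_eqI[OF assms(1) carrier_vec_smult[OF assms(2)]]) (simp_all add: lincomb_smult)

lemma Vsp_iff_coord:
  assumes "is_ordered_basis n B" "i \<le> n"
  shows "x \<in> Vsp B i \<longleftrightarrow> x \<in> carrier_vec n \<and> (\<forall>j\<ge>i. coord n B x j = 0)"
proof
  assume "x \<in> Vsp B i"
  then obtain c where "x = lincomb i c B" unfolding Vsp_def by blast
  define c' where "c' = (\<lambda>j. if j < i then c j else 0)"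
  have x: "x = lincomb i c' B"
    unfolding \<open>x = lincomb i c B\<close> c'_def by (rule lincomb_cong) simp
  then have "x = lincomb n c' B"
    using assms(2) lincomb_extend_zero[of i c' n B] by (simp add: c'_def)
  moreover have car: "x \<in> carrier_vec n"
    unfolding x using assms unfolding is_ordered_basis_def by (intro lincomb_carrier_vec) auto
  ultimately have "coord n B x = c'"
    using assms(2) by (intro coord_eqI[OF assms(1) car]) (auto simp: c'_def)
  then show "x \<in> carrier_vec n \<and> (\<forall>j\<ge>i. coord n B x j = 0)" using car by (auto simp: c'_def)
next
  assume h: "x \<in> carrier_vec n \<and> (\<forall>j\<ge>i. coord n B x j = 0)"
  then have "x = lincomb i (coord n B x) B"
    using coord_lincomb[OF assms(1)] lincomb_extend_zero assms(2) by metis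
  then show "x \<in> Vsp B i" unfolding Vsp_def by blast
qed

lemma Vsp_carrier_vec:
  assumes "is_ordered_basis n B"
  shows "Vsp B n = carrier_vec n"
  using Vsp_iff_coord[OF assms order_refl] coord_lincomb[OF assms] by blast

lemma Vsp_zero: "Vsp B 0 = {(\<lambda>k. 0)}"
  unfolding Vsp_def lincomb_def by simp

lemma Vsp_mono:
  assumes "is_ordered_basis n B" "j \<le> i" "i \<le> n"
  shows "Vsp B j \<subseteq> Vsp B i"
  using Vsp_iff_coord[OF assms(1)] assms(2,3) by auto

lemma Vsp_vadd:
  assumes "is_ordered_basis n B" "i \<le> n" "x \<in> Vsp B i" "y \<in> Vsp B i"
  shows "vadd x y \<in> Vsp B i"
  using assms Vsp_iff_coord[OF assms(1,2)] by (auto simp: coord_vadd carrier_vec_vadd)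

lemma Vsp_smult:
  assumes "is_ordered_basis n B" "i \<le> n" "x \<in> Vsp B i"
  shows "smult r x \<in> Vsp B i"
  using assms Vsp_iff_coord[OF assms(1,2)] by (auto simp: coord_smult carrier_vec_smult)

lemma layer_iff_coord:
  assumes "is_ordered_basis n B" "i < n"
  shows "x \<in> Vsp B (Suc i) - Vsp B i \<longleftrightarrow>
    x \<in> carrier_vec n \<and> coord n B x i \<noteq> 0 \<and> (\<forall>j>i. coord n B x j = 0)"
  using Vsp_iff_coord[OF assms(1), of "Suc i"] Vsp_iff_coord[OF assms(1), of i] assms(2)
  by (auto simp: Suc_le_eq) (metis le_eq_less_or_eq)

lemma level_layer:
  assumes "is_ordered_basis n B" "i < n" "x \<in> Vsp B (Suc i) - Vsp B i"
  shows "level B x = Suc i"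
  unfolding level_def
proof (rule Least_equality)
  show "x \<in> Vsp B (Suc i)" using assms(3) by simp
  show "Suc i \<le> j" if "x \<in> Vsp B j" for j
    using that assms Vsp_mono[OF assms(1), of j i] by (meson DiffD2 not_less_eq_eq less_imp_le subsetD)
qed

section \<open>The lexicographic order on a layer\<close>

lemma respectful_strict_total_order: "respectful lt \<Longrightarrow> strict_total_order lt"
  unfolding respectful_def by blast

lemma strict_total_orderD:
  assumes "strict_total_order lt"
  shows "\<not> lt x x" "lt x y \<Longrightarrow> lt y z \<Longrightarrow> lt x z" "x \<noteq> y \<Longrightarrow> lt x y \<or> lt y x"
  using assms unfolding strict_total_order_def by blast+

definition top_diff :: "nat \<Rightarrow> (nat \<Rightarrow> nat \<Rightarrow> 'a::ring_1) \<Rightarrow> (nat \<Rightarrow> 'a) \<Rightarrow> (nat \<Rightarrow> 'a) \<Rightarrow> nat" where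
  "top_diff n B x y = (GREATEST k. k < n \<and> coord n B x k \<noteq> coord n B y k)"

definition lex_coord :: "nat \<Rightarrow> ('a::ring_1 \<Rightarrow> 'a \<Rightarrow> bool) \<Rightarrow> (nat \<Rightarrow> nat \<Rightarrow> 'a)
    \<Rightarrow> (nat \<Rightarrow> 'a) \<Rightarrow> (nat \<Rightarrow> 'a) \<Rightarrow> bool" where
  "lex_coord n lt B x y \<longleftrightarrow> x \<noteq> y \<and> lt (coord n B x (top_diff n B x y)) (coord n B y (top_diff n B x y))"

lemma lexless_same_level: "level B x = level B y \<Longrightarrow> lexless n lt B x y \<longleftrightarrow> lex_coord n lt B x y"
  unfolding lexless_def lex_coord_def top_diff_def Let_def by simp

lemma top_diff_commute: "top_diff n B x y = top_diff n B y x"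
proof -
  have "(\<lambda>k. k < n \<and> coord n B x k \<noteq> coord n B y k) = (\<lambda>k. k < n \<and> coord n B y k \<noteq> coord n B x k)"
    by auto
  then show ?thesis unfolding top_diff_def by simp
qed

lemma top_diff_eqI:
  assumes "k < n" "coord n B x k \<noteq> coord n B y k"
    and "\<forall>j. k < j \<longrightarrow> j < n \<longrightarrow> coord n B x j = coord n B y j"
  shows "top_diff n B x y = k"
  unfolding top_diff_def using assms by (intro Greatest_equality) (auto simp: not_le[symmetric])

lemma top_diff_exists:
  assumes "is_ordered_basis n B" "x \<in> carrier_vec n" "y \<in> carrier_vec n" "x \<noteq> y"
  obtains k where "k < n" "coord n B x k \<noteq> coord n B y k"
    "\<forall>j. k < j \<longrightarrow> j < n \<longrightarrow> coord n B x j = coord n B y j"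
proof -
  define D where "D = {k. k < n \<and> coord n B x k \<noteq> coord n B y k}"
  have "coord n B x \<noteq> coord n B y" using coord_inj[OF assms(1-3)] assms(4) by blast
  then obtain j where "coord n B x j \<noteq> coord n B y j" by blast
  moreover have "\<not> n \<le> j" using coord_lincomb(1)[OF assms(1,2)] coord_lincomb(1)[OF assms(1,3)] calculation
    by auto
  ultimately have "j \<in> D" unfolding D_def by simp
  moreover have "finite D" unfolding D_def by simp
  ultimately have max: "Max D \<in> D" "\<And>k. k \<in> D \<Longrightarrow> k \<le> Max D" by (auto intro: Max_in)
  show ?thesis
  proof (rule that[of "Max D"])
    show "Max D < n" "coord n B x (Max D) \<noteq> coord n B y (Max D)" using max(1) unfolding D_def by auto
    show "\<forall>j. Max D < j \<longrightarrow> j < n \<longrightarrow> coord n B x j = coord n B y j"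
      using max(2) unfolding D_def by (auto simp: not_le[symmetric])
  qed
qed

lemma lex_coord_total:
  assumes "is_ordered_basis n B" "strict_total_order lt" "x \<in> carrier_vec n" "y \<in> carrier_vec n" "x \<noteq> y"
  shows "lex_coord n lt B x y \<or> lex_coord n lt B y x"
proof -
  obtain k where k: "k < n" "coord n B x k \<noteq> coord n B y k"
    "\<forall>j. k < j \<longrightarrow> j < n \<longrightarrow> coord n B x j = coord n B y j"
    by (rule top_diff_exists[OF assms(1,3,4,5)])
  have t: "top_diff n B x y = k" by (rule top_diff_eqI[OF k])
  moreover have "top_diff n B y x = k" using t by (simp only: top_diff_commute[of n B y x])
  ultimately show ?thesis
    unfolding lex_coord_def using assms(5) strict_total_orderD(3)[OF assms(2) k(2)] by simp
qed

lemma lex_coord_asym: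
  assumes "strict_total_order lt" "lex_coord n lt B x y"
  shows "\<not> lex_coord n lt B y x"
proof
  assume "lex_coord n lt B y x"
  then have "lt (coord n B y (top_diff n B x y)) (coord n B x (top_diff n B x y))"
    unfolding lex_coord_def top_diff_commute[of n B y x] by simp
  moreover have "lt (coord n B x (top_diff n B x y)) (coord n B y (top_diff n B x y))"
    using assms(2) unfolding lex_coord_def by simp
  ultimately show False using strict_total_orderD(1,2)[OF assms(1)] by blast
qed

lemma lex_coord_trans:
  assumes ob: "is_ordered_basis n B" and "strict_total_order lt"
    and car: "x \<in> carrier_vec n" "y \<in> carrier_vec n" "z \<in> carrier_vec n"
    and xy: "lex_coord n lt B x y" and yz: "lex_coord n lt B y z"
  shows "lex_coord n lt B x z"
proof -
  note irr = strict_total_orderD(1)[OF assms(2)] and tr = strict_total_orderD(2)[OF assms(2)]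
  have "x \<noteq> y" "y \<noteq> z" using xy yz unfolding lex_coord_def by simp_all
  obtain k1 where k1: "k1 < n" "coord n B x k1 \<noteq> coord n B y k1"
    "\<forall>k. k1 < k \<longrightarrow> k < n \<longrightarrow> coord n B x k = coord n B y k"
    by (rule top_diff_exists[OF ob car(1,2) \<open>x \<noteq> y\<close>])
  obtain k2 where k2: "k2 < n" "coord n B y k2 \<noteq> coord n B z k2"
    "\<forall>k. k2 < k \<longrightarrow> k < n \<longrightarrow> coord n B y k = coord n B z k"
    by (rule top_diff_exists[OF ob car(2,3) \<open>y \<noteq> z\<close>])
  have l1: "lt (coord n B x k1) (coord n B y k1)" using xy top_diff_eqI[OF k1] unfolding lex_coord_def by simp
  have l2: "lt (coord n B y k2) (coord n B z k2)" using yz top_diff_eqI[OF k2] unfolding lex_coord_def by simp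
  define k where "k = max k1 k2"
  have lk: "lt (coord n B x k) (coord n B z k)"
  proof (cases k1 k2 rule: linorder_cases)
    case less
    then show ?thesis using l2 k1(3) k2(1) unfolding k_def by simp
  next
    case equal
    then show ?thesis using l1 l2 tr unfolding k_def by simp
  next
    case greater
    then show ?thesis using l1 k2(3) k1(1) unfolding k_def by simp
  qed
  then have "coord n B x k \<noteq> coord n B z k" using irr by metis
  moreover have "\<forall>j. k < j \<longrightarrow> j < n \<longrightarrow> coord n B x j = coord n B z j"
    using k1(3) k2(3) k_def by auto
  ultimately have "top_diff n B x z = k" using k1(1) k2(1) k_def by (intro top_diff_eqI) auto
  then show ?thesis unfolding lex_coord_def using lk irr by auto
qed

lemma finite_has_least_wrt:
  assumes "finite S" "S \<noteq> {}"
    and "\<forall>x\<in>S. \<forall>y\<in>S. \<forall>z\<in>S. r x y \<longrightarrow> r y z \<longrightarrow> r x z"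
    and "\<forall>x\<in>S. \<forall>y\<in>S. x \<noteq> y \<longrightarrow> r x y \<or> r y x"
  shows "\<exists>a\<in>S. \<forall>b\<in>S. b \<noteq> a \<longrightarrow> r a b"
  using assms
proof (induction S rule: finite_ne_induct)
  case (insert x F)
  then obtain m where m: "m \<in> F" "\<forall>b\<in>F. b \<noteq> m \<longrightarrow> r m b" by blast
  show ?case
  proof (cases "r x m")
    case True
    have "r x b" if "b \<in> F" for b
    proof (cases "b = m")
      case False
      then have "r m b" using m that by blast
      then show ?thesis using True m(1) that insert.prems(1) by blast
    qed (use True in simp)
    then show ?thesis by blast
  next
    case False
    moreover have "x \<noteq> m" using m(1) insert.hyps by blast
    ultimately have "r m x" using m(1) insert.prems(2) by (meson insertCI)
    then show ?thesis using m by blast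
  qed
qed simp

definition lex_least :: "nat \<Rightarrow> ('a::ring_1 \<Rightarrow> 'a \<Rightarrow> bool) \<Rightarrow> (nat \<Rightarrow> nat \<Rightarrow> 'a)
    \<Rightarrow> (nat \<Rightarrow> 'a) set \<Rightarrow> (nat \<Rightarrow> 'a)" where
  "lex_least n lt B S = (THE a. a \<in> S \<and> (\<forall>b\<in>S. b \<noteq> a \<longrightarrow> lexless n lt B a b))"

lemma lex_least_layer:
  fixes lt :: "'a::{ring_1,finite} \<Rightarrow> 'a \<Rightarrow> bool"
  assumes ob: "is_ordered_basis n B" and "strict_total_order lt" and "i < n"
    and S: "S \<subseteq> Vsp B (Suc i) - Vsp B i" "S \<noteq> {}"
  shows "lex_least n lt B S \<in> S" "\<forall>b\<in>S. b \<noteq> lex_least n lt B S \<longrightarrow> lexless n lt B (lex_least n lt B S) b"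
proof -
  have car: "S \<subseteq> carrier_vec n" using S(1) layer_iff_coord[OF ob assms(3)] by blast
  have lex: "lexless n lt B x y \<longleftrightarrow> lex_coord n lt B x y" if "x \<in> S" "y \<in> S" for x y
    using level_layer[OF ob assms(3)] S(1) that by (simp add: lexless_same_level subset_iff)
  have "\<exists>a\<in>S. \<forall>b\<in>S. b \<noteq> a \<longrightarrow> lexless n lt B a b"
  proof (rule finite_has_least_wrt[OF _ S(2)])
    show "finite S" using car finite_carrier_vec finite_subset by blast
    show "\<forall>x\<in>S. \<forall>y\<in>S. \<forall>z\<in>S. lexless n lt B x y \<longrightarrow> lexless n lt B y z \<longrightarrow> lexless n lt B x z"
    proof (intro ballI impI)
      fix x y z assume "x \<in> S" "y \<in> S" "z \<in> S" "lexless n lt B x y" "lexless n lt B y z"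
      with car show "lexless n lt B x z" using lex_coord_trans[OF ob assms(2), of x y z] by (auto simp: lex)
    qed
    show "\<forall>x\<in>S. \<forall>y\<in>S. x \<noteq> y \<longrightarrow> lexless n lt B x y \<or> lexless n lt B y x"
    proof (intro ballI impI)
      fix x y assume "x \<in> S" "y \<in> S" "x \<noteq> y"
      with car show "lexless n lt B x y \<or> lexless n lt B y x"
        using lex_coord_total[OF ob assms(2), of x y] by (auto simp: lex)
    qed
  qed
  then obtain a where a: "a \<in> S" "\<forall>b\<in>S. b \<noteq> a \<longrightarrow> lexless n lt B a b" by blast
  have asym: "\<not> lexless n lt B b a" if "b \<in> S" "lexless n lt B a b" for b
    using that a(1) lex[of a b] lex[of b a] lex_coord_asym[OF assms(2), of n B a b] by simp
  have "\<exists>!a. a \<in> S \<and> (\<forall>b\<in>S. b \<noteq> a \<longrightarrow> lexless n lt B a b)"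
  proof (rule ex1I[of _ a])
    fix a' assume a': "a' \<in> S \<and> (\<forall>b\<in>S. b \<noteq> a' \<longrightarrow> lexless n lt B a' b)"
    show "a' = a"
    proof (rule ccontr)
      assume "a' \<noteq> a"
      then have "lexless n lt B a a'" "lexless n lt B a' a" using a a' by auto
      then show False using asym[of a'] a' by simp
    qed
  qed (use a in blast)
  then have "lex_least n lt B S \<in> S \<and> (\<forall>b\<in>S. b \<noteq> lex_least n lt B S \<longrightarrow> lexless n lt B (lex_least n lt B S) b)"
    unfolding lex_least_def by (rule theI')
  then show "lex_least n lt B S \<in> S" "\<forall>b\<in>S. b \<noteq> lex_least n lt B S \<longrightarrow> lexless n lt B (lex_least n lt B S) b"
    by auto
qed

section \<open>The greedy construction\<close>

lemma left_ideal_lgen: "left_ideal (lgen (r::'a::ring_1))"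
  unfolding left_ideal_def lgen_def
  by (auto, metis mult_zero_left, metis distrib_right, metis mult.assoc)

lemma left_submoduleD:
  assumes "left_submodule n C"
  shows "C \<subseteq> carrier_vec n" "(\<lambda>k. 0) \<in> C" "x \<in> C \<Longrightarrow> y \<in> C \<Longrightarrow> vadd x y \<in> C"
    "x \<in> C \<Longrightarrow> smult r x \<in> C"
  using assms unfolding left_submodule_def by blast+

definition line_sum :: "(nat \<Rightarrow> 'a::ring_1) \<Rightarrow> (nat \<Rightarrow> 'a) set \<Rightarrow> (nat \<Rightarrow> 'a) set" where
  "line_sum a C = {vadd (smult r a) c | r c. c \<in> C}"

lemma greedy_Suc:
  "greedy n lt B P \<Gamma> (Suc i) =
    (let C = greedy n lt B P \<Gamma> i; S = candidates B P \<Gamma> (Suc i) C in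
     if S = {} then C else line_sum (lex_least n lt B S) C)"
  by (simp add: Let_def line_sum_def lex_least_def)

lemma subset_line_sum: "C \<subseteq> line_sum a C"
proof
  fix c assume "c \<in> C"
  then show "c \<in> line_sum a C" unfolding line_sum_def
    by (intro CollectI exI[of _ 0] exI[of _ c]) (simp add: vadd_def smult_def)
qed

lemma in_line_sum: "(\<lambda>k. 0) \<in> C \<Longrightarrow> a \<in> line_sum a C"
  unfolding line_sum_def by (intro CollectI exI[of _ 1] exI[of _ "\<lambda>k. 0"]) (simp add: vadd_def smult_def)

lemma greedy_mono:
  assumes "i \<le> j"
  shows "greedy n lt B P \<Gamma> i \<subseteq> greedy n lt B P \<Gamma> j"
  using assms
proof (induction j)
  case (Suc j)
  have "greedy n lt B P \<Gamma> j \<subseteq> greedy n lt B P \<Gamma> (Suc j)"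
    unfolding greedy_Suc Let_def using subset_line_sum by auto
  then show ?case using Suc by (metis le_Suc_eq order_refl order_trans)
qed simp

lemma left_submodule_line_sum:
  assumes "left_submodule n C" "a \<in> carrier_vec n"
  shows "left_submodule n (line_sum a C)"
  unfolding left_submodule_def
proof (intro conjI ballI allI)
  show "line_sum a C \<subseteq> carrier_vec n"
    using left_submoduleD(1)[OF assms(1)] assms(2) unfolding line_sum_def
    by (auto intro!: carrier_vec_vadd carrier_vec_smult)
  show "(\<lambda>k. 0) \<in> line_sum a C"
    using left_submoduleD(2)[OF assms(1)] subset_line_sum by blast
next
  fix x y assume "x \<in> line_sum a C" "y \<in> line_sum a C"
  then obtain r c r' c' where "x = vadd (smult r a) c" "c \<in> C" "y = vadd (smult r' a) c'" "c' \<in> C"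
    unfolding line_sum_def by blast
  moreover have "vadd (vadd (smult r a) c) (vadd (smult r' a) c') = vadd (smult (r + r') a) (vadd c c')"
    unfolding vadd_def smult_def by (simp add: fun_eq_iff algebra_simps)
  ultimately show "vadd x y \<in> line_sum a C"
    using left_submoduleD(3)[OF assms(1)] unfolding line_sum_def by blast
next
  fix q x assume "x \<in> line_sum a C"
  then obtain r c where "x = vadd (smult r a) c" "c \<in> C" unfolding line_sum_def by blast
  moreover have "smult q (vadd (smult r a) c) = vadd (smult (q * r) a) (smult q c)"
    unfolding vadd_def smult_def by (simp add: fun_eq_iff algebra_simps)
  ultimately show "smult q x \<in> line_sum a C"
    using left_submoduleD(4)[OF assms(1)] unfolding line_sum_def by blast
qed

lemma line_sum_Vsp:
  assumes "is_ordered_basis n B" "i \<le> n" "a \<in> Vsp B i" "C \<subseteq> Vsp B i"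
  shows "line_sum a C \<subseteq> Vsp B i"
  using assms unfolding line_sum_def by (auto intro!: Vsp_vadd Vsp_smult)

text \<open>This is where the generator system \<open>\<Gamma>\<close> suffices: every nonzero coefficient \<open>r\<close>
  is a unit multiple of the \<open>\<gamma> \<in> \<Gamma>\<close> generating \<open>Rr\<close>, and \<open>P\<close> is invariant under units.\<close>
lemma line_sum_property:
  fixes a :: "nat \<Rightarrow> 'a::{ring_1,finite}"
  assumes lm: "left_multiplicative n P" and gs: "generator_system \<Gamma>"
    and C: "left_submodule n C" "\<forall>x\<in>C. P x"
    and a: "a \<in> carrier_vec n" "\<forall>\<gamma>\<in>\<Gamma>. \<forall>c\<in>C. P (vadd (smult \<gamma> a) c)"
  shows "\<forall>x\<in>line_sum a C. P x"
proof
  fix x assume "x \<in> line_sum a C"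
  then obtain r c where x: "x = vadd (smult r a) c" and c: "c \<in> C" unfolding line_sum_def by blast
  show "P x"
  proof (cases "r = 0")
    case True
    then show ?thesis using C(2) c x unfolding vadd_def smult_def by simp
  next
    case False
    then have "lgen r \<noteq> {0}" using lgen_self[of r] by auto
    then obtain \<gamma> where \<gamma>: "\<gamma> \<in> \<Gamma>" "lgen r = lgen \<gamma>"
      using gs left_ideal_lgen[of r] unfolding generator_system_def by metis
    obtain u where u: "is_unit u" "r = u*\<gamma>" using lgen_eq_imp_unit_multiple[OF \<gamma>(2)] .
    obtain v where v: "u*v = 1" "v*u = 1" using u(1) unfolding is_unit_def by blast
    have vc: "smult v c \<in> C" and "c \<in> carrier_vec n"
      using left_submoduleD[OF C(1)] c by auto
    then have car: "vadd (smult \<gamma> a) (smult v c) \<in> carrier_vec n"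
      using a(1) by (intro carrier_vec_vadd carrier_vec_smult)
    have "x = smult u (vadd (smult \<gamma> a) (smult v c))"
      unfolding x vadd_def smult_def u(2) by (simp add: fun_eq_iff distrib_left mult.assoc[symmetric] v)
    then show ?thesis using a(2) \<gamma>(1) vc lm u(1) car unfolding left_multiplicative_def by simp
  qed
qed

lemma greedy_invariant:
  fixes lt :: "'a::{ring_1,finite} \<Rightarrow> 'a \<Rightarrow> bool"
  assumes ob: "is_ordered_basis n B" and so: "strict_total_order lt"
    and lm: "left_multiplicative n P" and "P (\<lambda>k. 0)" and gs: "generator_system \<Gamma>"
  shows "i \<le> n \<Longrightarrow> greedy n lt B P \<Gamma> i \<subseteq> Vsp B i \<and> left_submodule n (greedy n lt B P \<Gamma> i)
    \<and> (\<forall>x\<in>greedy n lt B P \<Gamma> i. P x)"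
proof (induction i)
  case 0
  have "left_submodule n (greedy n lt B P \<Gamma> 0)"
    unfolding left_submodule_def vadd_def smult_def using carrier_vec_zero by auto
  then show ?case using \<open>P (\<lambda>k. 0)\<close> by (simp add: Vsp_zero)
next
  case (Suc i)
  define G where "G = greedy n lt B P \<Gamma> i"
  define S where "S = candidates B P \<Gamma> (Suc i) G"
  have i: "i < n" using Suc by simp
  have G: "G \<subseteq> Vsp B (Suc i)" "left_submodule n G" "\<forall>x\<in>G. P x"
    using Suc i Vsp_mono[OF ob, of i "Suc i"] unfolding G_def by auto
  have S: "S \<subseteq> Vsp B (Suc i) - Vsp B i" unfolding S_def candidates_def by auto
  have step: "greedy n lt B P \<Gamma> (Suc i) = (if S = {} then G else line_sum (lex_least n lt B S) G)"
    unfolding greedy_Suc G_def S_def Let_def by simp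
  show ?case
  proof (cases "S = {}")
    case False
    let ?a = "lex_least n lt B S"
    have a: "?a \<in> Vsp B (Suc i)" "\<forall>\<gamma>\<in>\<Gamma>. \<forall>c\<in>G. P (vadd (smult \<gamma> ?a) c)"
      using lex_least_layer(1)[OF ob so i S False] unfolding S_def candidates_def by auto
    have "?a \<in> carrier_vec n" using a(1) Vsp_iff_coord[OF ob, of "Suc i"] i by auto
    then show ?thesis
      unfolding step using False line_sum_Vsp[OF ob _ a(1) G(1)] i
        left_submodule_line_sum[OF G(2)] line_sum_property[OF lm gs G(2,3) _ a(2)] by simp
  qed (use G step in simp)
qed
lemma candidate_of_submodule:
  assumes "left_submodule n C" "\<forall>x\<in>C. P x" "G \<subseteq> C" "x \<in> C" "x \<in> Vsp B (Suc i) - Vsp B i"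
  shows "x \<in> candidates B P \<Gamma> (Suc i) G"
proof -
  have "vadd (smult \<gamma> x) c \<in> C" if "c \<in> G" for \<gamma> c
    using assms(3,4) that by (intro left_submoduleD(3,4)[OF assms(1)]) auto
  then show ?thesis using assms(2,5) unfolding candidates_def by auto
qed

lemma left_ideal_lead_coeffs:
  assumes ob: "is_ordered_basis n B" and i: "i < n" and C: "left_submodule n C"
  shows "left_ideal {coord n B y i | y. y \<in> C \<inter> Vsp B (Suc i)}"
proof -
  define W where "W = C \<inter> Vsp B (Suc i)"
  have i': "Suc i \<le> n" using i by simp
  have car: "x \<in> carrier_vec n" if "x \<in> W" for x
    using that left_submoduleD(1)[OF C] unfolding W_def by blast
  have "(\<lambda>k. 0) \<in> W"
    using left_submoduleD(2)[OF C] Vsp_iff_coord[OF ob i'] carrier_vec_zero coord_zero[OF ob]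
    unfolding W_def by simp
  then have "0 \<in> {coord n B y i | y. y \<in> W}"
    using coord_zero[OF ob] by force
  moreover have "p + q \<in> {coord n B y i | y. y \<in> W}"
    if pq: "p \<in> {coord n B y i | y. y \<in> W}" "q \<in> {coord n B y i | y. y \<in> W}" for p q
  proof -
    obtain x y where xy: "p = coord n B x i" "x \<in> W" "q = coord n B y i" "y \<in> W"
      using pq by blast
    then have "vadd x y \<in> W"
      using left_submoduleD(3)[OF C] Vsp_vadd[OF ob i'] unfolding W_def by simp
    moreover have "p + q = coord n B (vadd x y) i"
      using xy coord_vadd[OF ob car[OF xy(2)] car[OF xy(4)]] by simp
    ultimately show ?thesis by blast
  qed
  moreover have "r * p \<in> {coord n B y i | y. y \<in> W}" if p: "p \<in> {coord n B y i | y. y \<in> W}" for r p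
  proof -
    obtain x where x: "p = coord n B x i" "x \<in> W" using p by blast
    then have "smult r x \<in> W"
      using left_submoduleD(4)[OF C] Vsp_smult[OF ob i'] unfolding W_def by simp
    moreover have "r * p = coord n B (smult r x) i"
      using x coord_smult[OF ob car[OF x(2)]] by simp
    ultimately show ?thesis by blast
  qed
  ultimately show ?thesis unfolding left_ideal_def W_def by blast
qed

lemma lexless_layer_iff:
  assumes ob: "is_ordered_basis n B" and i: "i < n"
    and xy: "x \<in> Vsp B (Suc i) - Vsp B i" "y \<in> Vsp B (Suc i) - Vsp B i"
    and "coord n B x i \<noteq> coord n B y i"
  shows "lexless n lt B x y \<longleftrightarrow> lt (coord n B x i) (coord n B y i)"
proof -
  have "top_diff n B x y = i"
    using xy layer_iff_coord[OF ob i] i assms(5) by (intro top_diff_eqI) auto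
  moreover have "x \<noteq> y" using assms(5) by auto
  moreover have "level B x = level B y" using level_layer[OF ob i] xy by simp
  ultimately show ?thesis using lexless_same_level[of B x y n lt] unfolding lex_coord_def by simp
qed

lemma lgen_lead_coeff_subset:
  assumes ob: "is_ordered_basis n B" and i: "i < n" and C: "left_submodule n C"
    and a: "a \<in> C \<inter> Vsp B (Suc i)"
  shows "lgen (coord n B a i) \<subseteq> {coord n B y i | y. y \<in> C \<inter> Vsp B (Suc i)}"
proof
  fix p assume "p \<in> lgen (coord n B a i)"
  then obtain r where "p = r * coord n B a i" unfolding lgen_def by blast
  moreover have "a \<in> carrier_vec n" using a left_submoduleD(1)[OF C] by blast
  ultimately have "p = coord n B (smult r a) i" using coord_smult[OF ob] by simp
  moreover have "smult r a \<in> C \<inter> Vsp B (Suc i)"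
    using a left_submoduleD(4)[OF C] Vsp_smult[OF ob, of "Suc i"] i by auto
  ultimately show "p \<in> {coord n B y i | y. y \<in> C \<inter> Vsp B (Suc i)}" by blast
qed

lemma smult_in_layer:
  assumes ob: "is_ordered_basis n B" and i: "i < n"
    and y: "y \<in> Vsp B (Suc i)" and "r * coord n B y i \<noteq> 0"
  shows "smult r y \<in> Vsp B (Suc i) - Vsp B i" "coord n B (smult r y) i = r * coord n B y i"
proof -
  have "y \<in> carrier_vec n" "\<forall>j>i. coord n B y j = 0"
    using y Vsp_iff_coord[OF ob, of "Suc i"] i by (auto simp: Suc_le_eq)
  then show "coord n B (smult r y) i = r * coord n B y i" "smult r y \<in> Vsp B (Suc i) - Vsp B i"
    unfolding layer_iff_coord[OF ob i] using assms(4) coord_smult[OF ob] carrier_vec_smult by simp_all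
qed

lemma respectful_unit_below:
  assumes resp: "respectful lt" and "\<beta> \<noteq> 0" and strict: "lgen \<beta> \<subset> lgen \<delta>"
  obtains \<alpha> where "is_unit \<alpha>" "\<alpha> * \<delta> \<noteq> 0" "lt (\<alpha> * \<delta>) \<beta>"
proof -
  have "\<delta> \<noteq> 0"
  proof
    assume "\<delta> = 0"
    then have "lgen \<delta> = {0}" unfolding lgen_def by auto
    moreover have "0 \<in> lgen \<beta>" unfolding lgen_def by (auto intro: exI[of _ 0])
    ultimately show False using strict by auto
  qed
  then obtain \<alpha> where \<alpha>: "is_unit \<alpha>" "\<forall>u. is_unit u \<longrightarrow> lt (\<alpha> * \<delta>) (u * \<beta>)"
    using resp strict \<open>\<beta> \<noteq> 0\<close> unfolding respectful_def by blast
  have "is_unit 1" unfolding is_unit_def by auto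
  then have "lt (\<alpha> * \<delta>) \<beta>" using \<alpha>(2) by fastforce
  moreover have "\<alpha> * \<delta> \<noteq> 0"
  proof
    assume "\<alpha> * \<delta> = 0"
    obtain v where "v * \<alpha> = 1" using \<alpha>(1) unfolding is_unit_def by blast
    then have "\<delta> = v * (\<alpha> * \<delta>)" by (simp add: mult.assoc[symmetric])
    then show False using \<open>\<alpha> * \<delta> = 0\<close> \<open>\<delta> \<noteq> 0\<close> by simp
  qed
  ultimately show ?thesis using that \<alpha>(1) by blast
qed

text \<open>Respectfulness at work: a strictly larger ideal of leading coefficients would contain
  a unit multiple of its generator that is smaller than the leading coefficient of the chosen
  vector, giving a smaller candidate.\<close>
lemma lead_coeffs_le_least_candidate:
  fixes lt :: "'a::{ring_1,finite} \<Rightarrow> 'a \<Rightarrow> bool"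
  assumes resp: "respectful lt" and ob: "is_ordered_basis n B" and i: "i < n"
    and C: "left_submodule n C" "\<forall>x\<in>C. P x" "G \<subseteq> C"
    and S: "S = candidates B P \<Gamma> (Suc i) G" "S \<noteq> {}" and aC: "lex_least n lt B S \<in> C"
    and \<delta>: "lgen \<delta> = {coord n B y i | y. y \<in> C \<inter> Vsp B (Suc i)}"
  shows "lgen \<delta> \<subseteq> lgen (coord n B (lex_least n lt B S) i)"
proof (rule ccontr)
  define a where "a = lex_least n lt B S"
  define \<beta> where "\<beta> = coord n B a i"
  note so = respectful_strict_total_order[OF resp]
  have lay: "S \<subseteq> Vsp B (Suc i) - Vsp B i" unfolding S(1) candidates_def by auto
  note least = lex_least_layer[OF ob so i lay S(2), folded a_def]
  have aL: "a \<in> Vsp B (Suc i) - Vsp B i" using least(1) lay by blast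
  then have "\<beta> \<noteq> 0" using layer_iff_coord[OF ob i] \<beta>_def by auto
  have "lgen \<beta> \<subseteq> lgen \<delta>"
    unfolding \<delta> \<beta>_def using lgen_lead_coeff_subset[OF ob i C(1)] aC aL a_def by blast
  moreover assume "\<not> lgen \<delta> \<subseteq> lgen (coord n B (lex_least n lt B S) i)"
  ultimately have "lgen \<beta> \<subset> lgen \<delta>" unfolding \<beta>_def a_def by blast
  then obtain \<alpha> where \<alpha>: "is_unit \<alpha>" "\<alpha> * \<delta> \<noteq> 0" "lt (\<alpha> * \<delta>) \<beta>"
    using respectful_unit_below[OF resp \<open>\<beta> \<noteq> 0\<close>] by blast
  obtain y where y: "\<delta> = coord n B y i" "y \<in> C \<inter> Vsp B (Suc i)"
    using lgen_self[of \<delta>] \<delta> by blast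
  have y'L: "smult \<alpha> y \<in> Vsp B (Suc i) - Vsp B i" and cy': "coord n B (smult \<alpha> y) i = \<alpha> * \<delta>"
    using smult_in_layer[OF ob i _ \<alpha>(2)[unfolded y(1)]] y by auto
  have "smult \<alpha> y \<in> S"
    using candidate_of_submodule[OF C _ y'L] left_submoduleD(4)[OF C(1)] y(2) S(1) by blast
  moreover have ne: "\<beta> \<noteq> \<alpha> * \<delta>" using \<alpha>(3) strict_total_orderD(1)[OF so] by auto
  ultimately have "lexless n lt B a (smult \<alpha> y)" using least(2) cy' \<beta>_def by auto
  then have "lt \<beta> (\<alpha> * \<delta>)" using lexless_layer_iff[OF ob i aL y'L] ne cy' \<beta>_def by simp
  then show False using \<alpha>(3) strict_total_orderD(1,2)[OF so] by blast
qed

lemma zero_in_greedy: "(\<lambda>k. 0) \<in> greedy n lt B P \<Gamma> i"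
  using greedy_mono[of 0 i n lt B P \<Gamma>] by simp

lemma Vsp_Suc_cancel_lead:
  assumes ob: "is_ordered_basis n B" and i: "i < n"
    and "x \<in> Vsp B (Suc i)" "a \<in> Vsp B (Suc i)" "coord n B x i = r * coord n B a i"
  shows "vadd x (smult (- r) a) \<in> Vsp B i"
proof -
  have car: "x \<in> carrier_vec n" "a \<in> carrier_vec n"
    and high: "\<forall>j\<ge>Suc i. coord n B x j = 0" "\<forall>j\<ge>Suc i. coord n B a j = 0"
    using assms(3,4) Vsp_iff_coord[OF ob, of "Suc i"] i by auto
  have "coord n B (vadd x (smult (- r) a)) j = coord n B x j - r * coord n B a j" for j
    using coord_vadd[OF ob car(1) carrier_vec_smult[OF car(2)]] coord_smult[OF ob car(2)] by simp
  moreover have "coord n B x j - r * coord n B a j = 0" if "i \<le> j" for j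
    using that high assms(5) by (cases "j = i") auto
  ultimately show ?thesis
    using Vsp_iff_coord[OF ob, of i] i car by (simp add: carrier_vec_vadd carrier_vec_smult)
qed

lemma greedy_Suc_absorbs:
  fixes lt :: "'a::{ring_1,finite} \<Rightarrow> 'a \<Rightarrow> bool"
  assumes plir: "principal_left_ideal_ring TYPE('a)" and resp: "respectful lt"
    and ob: "is_ordered_basis n B" and i: "i < n"
    and C: "left_submodule n C" "\<forall>x\<in>C. P x" "greedy n lt B P \<Gamma> n \<subseteq> C"
    and IH: "C \<inter> Vsp B i \<subseteq> greedy n lt B P \<Gamma> i"
  shows "C \<inter> Vsp B (Suc i) \<subseteq> greedy n lt B P \<Gamma> (Suc i)"
proof
  fix x assume x: "x \<in> C \<inter> Vsp B (Suc i)"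
  define G where "G = greedy n lt B P \<Gamma> i"
  define S where "S = candidates B P \<Gamma> (Suc i) G"
  define a where "a = lex_least n lt B S"
  have GC: "G \<subseteq> C" using greedy_mono[of i n n lt B P \<Gamma>] i C(3) unfolding G_def by auto
  show "x \<in> greedy n lt B P \<Gamma> (Suc i)"
  proof (cases "x \<in> Vsp B i")
    case True
    then show ?thesis using IH x greedy_mono[of i "Suc i" n lt B P \<Gamma>] by auto
  next
    case False
    then have "x \<in> S" using candidate_of_submodule[OF C(1,2) GC] x unfolding S_def by blast
    then have "S \<noteq> {}" by blast
    then have step: "greedy n lt B P \<Gamma> (Suc i) = line_sum a G"
      unfolding greedy_Suc Let_def G_def S_def a_def by simp
    have "a \<in> greedy n lt B P \<Gamma> (Suc i)" unfolding step G_def by (rule in_line_sum[OF zero_in_greedy])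
    then have aC: "a \<in> C" using greedy_mono[of "Suc i" n n lt B P \<Gamma>] i C(3) by auto
    have "S \<subseteq> Vsp B (Suc i) - Vsp B i" unfolding S_def candidates_def by auto
    then have aV: "a \<in> Vsp B (Suc i)"
      using lex_least_layer(1)[OF ob respectful_strict_total_order[OF resp] i _ \<open>S \<noteq> {}\<close>]
      unfolding a_def by blast
    obtain \<delta> where "{coord n B y i | y. y \<in> C \<inter> Vsp B (Suc i)} = lgen \<delta>"
      using plir left_ideal_lead_coeffs[OF ob i C(1)] unfolding principal_left_ideal_ring_def by blast
    note \<delta> = this[symmetric]
    have "coord n B x i \<in> lgen \<delta>" using \<delta> x by blast
    then obtain r where r: "coord n B x i = r * coord n B a i"
      using lead_coeffs_le_least_candidate[OF resp ob i C(1,2) GC S_def \<open>S \<noteq> {}\<close> aC[unfolded a_def] \<delta>]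
      unfolding a_def lgen_def by blast
    define y where "y = vadd x (smult (- r) a)"
    have "y \<in> C" unfolding y_def using x aC by (intro left_submoduleD(3,4)[OF C(1)]) auto
    moreover have "y \<in> Vsp B i" using Vsp_Suc_cancel_lead[OF ob i _ aV r] x unfolding y_def by blast
    ultimately have "y \<in> G" using IH unfolding G_def by blast
    moreover have "x = vadd (smult r a) y"
      unfolding y_def vadd_def smult_def by (simp add: fun_eq_iff algebra_simps)
    ultimately show ?thesis unfolding step line_sum_def by blast
  qed
qed

lemma greedy_maximal:
  fixes lt :: "'a::{ring_1,finite} \<Rightarrow> 'a \<Rightarrow> bool"
  assumes "principal_left_ideal_ring TYPE('a)" "respectful lt" "is_ordered_basis n B"
    and "left_submodule n C" "\<forall>x\<in>C. P x" "greedy n lt B P \<Gamma> n \<subseteq> C"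
  shows "i \<le> n \<Longrightarrow> C \<inter> Vsp B i \<subseteq> greedy n lt B P \<Gamma> i"
proof (induction i)
  case 0
  then show ?case using zero_in_greedy by (simp add: Vsp_zero)
next
  case (Suc i)
  then show ?case using greedy_Suc_absorbs[OF assms(1-3) _ assms(4-6)] by simp
qed

theorem mainTheorem8:
  fixes n :: nat
    and lt :: "'a::{ring_1,finite} \<Rightarrow> 'a \<Rightarrow> bool"
    and B :: "nat \<Rightarrow> nat \<Rightarrow> 'a"
    and P :: "(nat \<Rightarrow> 'a) \<Rightarrow> bool"
    and \<Gamma> :: "'a set"
  assumes "principal_left_ideal_ring TYPE('a)"
    and "respectful lt"
    and "is_ordered_basis n B"
    and "left_multiplicative n P"
    and "P (\<lambda>k. 0)"
    and "generator_system \<Gamma>"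
  shows "left_submodule n (lexicode n lt B P \<Gamma>)
       \<and> (\<forall>x\<in>lexicode n lt B P \<Gamma>. P x)
       \<and> \<not> (\<exists>C. left_submodule n C \<and> lexicode n lt B P \<Gamma> \<subset> C \<and> (\<forall>x\<in>C. P x))"
proof -
  have code: "left_submodule n (lexicode n lt B P \<Gamma>)" "\<forall>x\<in>lexicode n lt B P \<Gamma>. P x"
    using greedy_invariant[OF assms(3) respectful_strict_total_order[OF assms(2)] assms(4-6) order_refl]
    unfolding lexicode_def by auto
  have "C \<subseteq> lexicode n lt B P \<Gamma>"
    if "left_submodule n C" "lexicode n lt B P \<Gamma> \<subseteq> C" "\<forall>x\<in>C. P x" for C
    using greedy_maximal[OF assms(1-3) that(1,3) that(2)[unfolded lexicode_def] order_refl]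
      left_submoduleD(1)[OF that(1)] Vsp_carrier_vec[OF assms(3)]
    unfolding lexicode_def by blast
  then show ?thesis using code by blast
qed

end
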